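(* Let $K$ be a field, $R$ a connected $\mathbb N$-graded $K$-algebra, and let $A$ be a graded trimmed right double Ore extension of $R$, with generators $x_1,x_2$, relation $x_2x_1=p_{12}x_1x_2+p_{11}x_1^2$ ($p_{12},p_{11}\in K$) and $x_ir=\sigma_{i1}(r)x_1+\sigma_{i2}(r)x_2$ for $r\in R$, $i=1,2$. Then $A$ is a graded quasi-commutative skew PBW extension of $R$ (in $x_1,x_2$) if and only if $p_{12}\ne0$, $p_{11}=0$, $\sigma_{11},\sigma_{22}$ are automorphisms of $R$, and $\sigma_{12}(r)=\sigma_{21}(r)=0$ for all $r\in R$.
   Context: A graded algebra is connected if its degree-zero part is $K$. A $K$-algebra $B\supseteq R$ is a right double Ore extension of $R$ if it is generated by $R$ and $x_1,x_2$; $x_2x_1=p_{12}x_1x_2+p_{11}x_1^2+\tau_1x_1+\tau_2x_2+\tau_0$ with $p_{12},p_{11}\in K$, $\tau_i\in R$; $B$ is a free left $R$-module with basis $\{x_1^ax_2^b\}$; $x_1R+x_2R\subseteq Rx_1+Rx_2+R$; write $x_ir=\sigma_{i1}(r)x_1+\sigma_{i2}(r)x_2+\delta_i(r)$. It is trimmed if $\delta_1=\delta_2=0$ and $\tau_0=\tau_1=\tau_2=0$; graded if all relations are homogeneous with $\deg x_1=\deg x_2=1$. A ring $A$ is a skew PBW extension of $R$ in $x_1,\dots,x_n$ if $R\subseteq A$; $A$ is a free left $R$-module on the monomials $x_1^{\alpha_1}\cdots x_n^{\alpha_n}$; for each $i$ and $r\ne0$ there is $c_{i,r}\in R\setminus\{0\}$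 with $x_ir-c_{i,r}x_i\in R$; for all $i,j$ there is $c_{i,j}\in R\setminus\{0\}$ with $x_jx_i-c_{i,j}x_ix_j\in R+Rx_1+\cdots+Rx_n$; then $x_ir=\sigma_i(r)x_i+\delta_i(r)$ with $\sigma_i$ an injective endomorphism. It is quasi-commutative if $x_ir=c_{i,r}x_i$ and $x_jx_i=c_{i,j}x_ix_j$; bijective if all $\sigma_i$ are bijective and $c_{i,j}$ invertible; graded if bijective, $R$ $\mathbb N$-graded, $\sigma_i$ graded, $\delta_i(R_m)\subseteq R_{m+1}$, and $x_jx_i-c_{i,j}x_ix_j\in R_2+R_1x_1+\cdots+R_1x_n$ with $c_{i,j}\in R_0$. *)

theory Defs
  imports Main
begin

text \<open>The ambient ring A is the whole type 'a (a ring with 1). The field K is a separate type 'k,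
  and the K-algebra structure is an injective ring homomorphism phi from K
  into the centre of A with image inside R.\<close>

definition subring_set :: "'a::ring_1 set \<Rightarrow> bool" where
  "subring_set R \<longleftrightarrow> 0 \<in> R \<and> 1 \<in> R \<and>
     (\<forall>a\<in>R. \<forall>b\<in>R. a + b \<in> R \<and> a - b \<in> R \<and> a * b \<in> R)"

definition central_alg_hom :: "('k::field \<Rightarrow> 'a::ring_1) \<Rightarrow> bool" where
  "central_alg_hom phi \<longleftrightarrow>
     (\<forall>k l. phi (k + l) = phi k + phi l \<and> phi (k * l) = phi k * phi l) \<and>
     phi 1 = 1 \<and> (\<forall>k a. phi k * a = a * phi k)"

inductive_set gen_subring :: "'a::ring_1 set \<Rightarrow> 'a set" for S where
  gen_base: "s \<in> S \<Longrightarrow> s \<in> gen_subring S"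
| gen_one: "1 \<in> gen_subring S"
| gen_diff: "a \<in> gen_subring S \<Longrightarrow> b \<in> gen_subring S \<Longrightarrow> a - b \<in> gen_subring S"
| gen_mult: "a \<in> gen_subring S \<Longrightarrow> b \<in> gen_subring S \<Longrightarrow> a * b \<in> gen_subring S"

definition left_free_basis :: "'a::ring_1 set \<Rightarrow> 'i set \<Rightarrow> ('i \<Rightarrow> 'a) \<Rightarrow> bool" where
  "left_free_basis R I b \<longleftrightarrow>
     (\<forall>y. \<exists>!c. (\<forall>i. c i \<in> R) \<and> (\<forall>i. i \<notin> I \<longrightarrow> c i = 0) \<and>
              finite {i. c i \<noteq> 0} \<and> y = (\<Sum>i\<in>{i. c i \<noteq> 0}. c i * b i))"

definition graded_alg :: "('k::field \<Rightarrow> 'a::ring_1) \<Rightarrow> 'a set \<Rightarrow> (nat \<Rightarrow> 'a set) \<Rightarrow> bool" where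
  "graded_alg phi R Rg \<longleftrightarrow>
     subring_set R \<and>
     (\<forall>m. Rg m \<subseteq> R \<and> 0 \<in> Rg m \<and>
          (\<forall>a\<in>Rg m. \<forall>b\<in>Rg m. a + b \<in> Rg m) \<and>
          (\<forall>k. \<forall>a\<in>Rg m. phi k * a \<in> Rg m)) \<and>
     (\<forall>m n. \<forall>a\<in>Rg m. \<forall>b\<in>Rg n. a * b \<in> Rg (m + n)) \<and>
     (\<forall>r\<in>R. \<exists>!f. (\<forall>m. f m \<in> Rg m) \<and> finite {m. f m \<noteq> 0} \<and>
                 r = (\<Sum>m\<in>{m. f m \<noteq> 0}. f m))"

definition connected_graded :: "('k::field \<Rightarrow> 'a::ring_1) \<Rightarrow> 'a set \<Rightarrow> (nat \<Rightarrow> 'a set) \<Rightarrow> bool" where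
  "connected_graded phi R Rg \<longleftrightarrow> graded_alg phi R Rg \<and> inj phi \<and> Rg 0 = range phi"

definition ring_aut_on :: "'a::ring_1 set \<Rightarrow> ('a \<Rightarrow> 'a) \<Rightarrow> bool" where
  "ring_aut_on R f \<longleftrightarrow> bij_betw f R R \<and>
     (\<forall>a\<in>R. \<forall>b\<in>R. f (a + b) = f a + f b \<and> f (a * b) = f a * f b) \<and> f 1 = 1"

definition graded_trimmed_right_double_ore ::
  "('k::field \<Rightarrow> 'a::ring_1) \<Rightarrow> 'a set \<Rightarrow> (nat \<Rightarrow> 'a set) \<Rightarrow> 'a \<Rightarrow> 'a \<Rightarrow> 'k \<Rightarrow> 'k \<Rightarrow>
   ('a \<Rightarrow> 'a) \<Rightarrow> ('a \<Rightarrow> 'a) \<Rightarrow> ('a \<Rightarrow> 'a) \<Rightarrow> ('a \<Rightarrow> 'a) \<Rightarrow> bool" where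
  "graded_trimmed_right_double_ore phi R Rg x1 x2 p12 p11 s11 s12 s21 s22 \<longleftrightarrow>
     subring_set R \<and> range phi \<subseteq> R \<and>
     gen_subring (R \<union> {x1, x2}) = UNIV \<and>
     x2 * x1 = phi p12 * x1 * x2 + phi p11 * x1 ^ 2 \<and>
     left_free_basis R UNIV (\<lambda>(a::nat, b::nat). x1 ^ a * x2 ^ b) \<and>
     (\<forall>r\<in>R. s11 r \<in> R \<and> s12 r \<in> R \<and> s21 r \<in> R \<and> s22 r \<in> R \<and>
        x1 * r = s11 r * x1 + s12 r * x2 \<and> x2 * r = s21 r * x1 + s22 r * x2) \<and>
     (\<forall>m. s11 ` Rg m \<subseteq> Rg m \<and> s12 ` Rg m \<subseteq> Rg m \<and>
          s21 ` Rg m \<subseteq> Rg m \<and> s22 ` Rg m \<subseteq> Rg m)"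

text \<open>Skew PBW extensions in variables xs = [x_1,...,x_n] (0-indexed list).
  Monomials x_1^{a_1} ... x_n^{a_n} are indexed by exponent lists of length n.\<close>
definition pbw_mono :: "'a::ring_1 list \<Rightarrow> nat list \<Rightarrow> 'a" where
  "pbw_mono xs \<alpha> = prod_list (map (\<lambda>(x, a). x ^ a) (zip xs \<alpha>))"

definition lin_span_vars :: "'a::ring_1 set \<Rightarrow> 'a set \<Rightarrow> 'a list \<Rightarrow> 'a set" where
  "lin_span_vars S0 S1 xs =
     {a + (\<Sum>k<length xs. b k * xs ! k) | a b. a \<in> S0 \<and> (\<forall>k. b k \<in> S1)}"

definition skew_PBW :: "'a::ring_1 set \<Rightarrow> 'a list \<Rightarrow> bool" where
  "skew_PBW R xs \<longleftrightarrow>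
     subring_set R \<and>
     left_free_basis R {\<alpha>. length \<alpha> = length xs} (pbw_mono xs) \<and>
     (\<forall>i<length xs. \<forall>r\<in>R. r \<noteq> 0 \<longrightarrow>
        (\<exists>c\<in>R. c \<noteq> 0 \<and> xs ! i * r - c * xs ! i \<in> R)) \<and>
     (\<forall>i<length xs. \<forall>j<length xs.
        (\<exists>c\<in>R. c \<noteq> 0 \<and> xs ! j * xs ! i - c * xs ! i * xs ! j \<in> lin_span_vars R R xs))"

definition graded_qc_skew_PBW ::
  "('k::field \<Rightarrow> 'a::ring_1) \<Rightarrow> 'a set \<Rightarrow> (nat \<Rightarrow> 'a set) \<Rightarrow> 'a list \<Rightarrow> bool" where
  "graded_qc_skew_PBW phi R Rg xs \<longleftrightarrow>
     skew_PBW R xs \<and> graded_alg phi R Rg \<and>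
     (\<exists>\<sigma> \<delta> c.
        (\<forall>i<length xs. \<forall>r\<in>R. \<sigma> i r \<in> R \<and> \<delta> i r \<in> R \<and>
            xs ! i * r = \<sigma> i r * xs ! i + \<delta> i r) \<and>
        (\<forall>i<length xs. \<forall>j<length xs. c i j \<in> R \<and> c i j \<noteq> 0 \<and>
            xs ! j * xs ! i - c i j * xs ! i * xs ! j \<in> lin_span_vars R R xs) \<and>
        \<comment> \<open>quasi-commutative\<close>
        (\<forall>i<length xs. \<forall>r\<in>R. \<delta> i r = 0) \<and>
        (\<forall>i<length xs. \<forall>j<length xs. xs ! j * xs ! i = c i j * xs ! i * xs ! j) \<and>
        \<comment> \<open>bijective\<close>
        (\<forall>i<length xs. bij_betw (\<sigma> i) R R) \<and>
        (\<forall>i<length xs. \<forall>j<length xs. \<exists>d\<in>R. c i j * d = 1 \<and> d * c i j = 1) \<and>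
        \<comment> \<open>graded\<close>
        (\<forall>i<length xs. \<forall>m. \<sigma> i ` Rg m \<subseteq> Rg m \<and> \<delta> i ` Rg m \<subseteq> Rg (Suc m)) \<and>
        (\<forall>i<length xs. \<forall>j<length xs. c i j \<in> Rg 0 \<and>
            xs ! j * xs ! i - c i j * xs ! i * xs ! j \<in> lin_span_vars (Rg 2) (Rg 1) xs))"

end

theory Submission
  imports Defs
begin

(* In a quasi-commutative skew PBW extension one has x_i r = sigma_i(r) x_i and x_2 x_1 = c x_1 x_2.
   Expanding these in the free left R-basis {x_1^a x_2^b} and comparing with the double Ore data
   forces sigma_12 = sigma_21 = 0, sigma_11 = sigma_1, sigma_22 = sigma_2, p_11 = 0 and p_12 = c /= 0.
   As r x_i = r' x_i implies r = r', the rule x_i r = sigma_ii(r) x_i makes the bijections sigma_ii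
   additive and multiplicative, i.e. automorphisms of R. Conversely, under these conditions
   sigma_i = sigma_ii, delta_i = 0 and the scalars c_12 = p_12, c_21 = p_12^-1 (which lie in R_0 = K)
   are quasi-commutative graded data, and the PBW monomials are the given basis indexed by
   exponent lists. *)

definition lin_comb :: "('i \<Rightarrow> 'a::ring_1) \<Rightarrow> ('i \<Rightarrow> 'a) \<Rightarrow> 'a" where
  "lin_comb b c = (\<Sum>i\<in>{i. c i \<noteq> 0}. c i * b i)"

definition finite_coeffs :: "'a::ring_1 set \<Rightarrow> 'i set \<Rightarrow> ('i \<Rightarrow> 'a) set" where
  "finite_coeffs R I = {c. (\<forall>i. c i \<in> R) \<and> (\<forall>i. i \<notin> I \<longrightarrow> c i = 0) \<and> finite {i. c i \<noteq> 0}}"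

lemma bij_betw_UNIV_iff_ex1: "bij_betw f A UNIV \<longleftrightarrow> (\<forall>y. \<exists>!x. x \<in> A \<and> y = f x)"
proof
  assume bij: "bij_betw f A UNIV"
  show "\<forall>y. \<exists>!x. x \<in> A \<and> y = f x"
  proof
    fix y
    have "y \<in> f ` A" using bij by (simp add: bij_betw_def)
    then obtain x where "x \<in> A" "y = f x" by (auto simp: image_iff)
    then show "\<exists>!x. x \<in> A \<and> y = f x"
      using bij by (auto simp: bij_betw_def dest: inj_onD)
  qed
next
  assume ex1: "\<forall>y. \<exists>!x. x \<in> A \<and> y = f x"
  then have "inj_on f A" by (auto intro: inj_onI)
  moreover have "f ` A = UNIV" using ex1 by (metis UNIV_eq_I imageI)
  ultimately show "bij_betw f A UNIV" by (simp add: bij_betw_def)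
qed

lemma left_free_basis_iff_bij_betw:
  "left_free_basis R I b \<longleftrightarrow> bij_betw (lin_comb b) (finite_coeffs R I) UNIV"
  unfolding left_free_basis_def bij_betw_UNIV_iff_ex1 lin_comb_def finite_coeffs_def
  by (simp only: mem_Collect_eq conj_assoc)

lemma lin_comb_eq_sum:
  assumes "finite F" "{i. c i \<noteq> 0} \<subseteq> F"
  shows "lin_comb b c = (\<Sum>i\<in>F. c i * b i)"
  unfolding lin_comb_def using assms by (intro sum.mono_neutral_left) auto

definition left_independent_pair :: "'a::ring_1 set \<Rightarrow> 'a \<Rightarrow> 'a \<Rightarrow> bool" where
  "left_independent_pair R x y \<longleftrightarrow>
     (\<forall>r\<in>R. \<forall>r'\<in>R. \<forall>s\<in>R. \<forall>s'\<in>R. r * x + r' * y = s * x + s' * y \<longrightarrow> r = s \<and> r' = s')"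

lemma left_independent_pairD:
  "left_independent_pair R x y \<Longrightarrow> r \<in> R \<Longrightarrow> r' \<in> R \<Longrightarrow> s \<in> R \<Longrightarrow> s' \<in> R \<Longrightarrow>
    r * x + r' * y = s * x + s' * y \<Longrightarrow> r = s \<and> r' = s'"
  unfolding left_independent_pair_def by blast

lemma left_independent_pair_swap:
  assumes "left_independent_pair R x y"
  shows "left_independent_pair R y x"
  unfolding left_independent_pair_def
proof (intro ballI impI)
  fix r r' s s' assume "r \<in> R" "r' \<in> R" "s \<in> R" "s' \<in> R" and "r * y + r' * x = s * y + s' * x"
  then show "r = s \<and> r' = s'"
    using left_independent_pairD[OF assms, of r' r s' s] by (simp add: add.commute)
qed

lemma left_free_basis_independent_pair:
  assumes basis: "left_free_basis R UNIV b" and "i \<noteq> j" "0 \<in> R"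
  shows "left_independent_pair R (b i) (b j)"
  unfolding left_independent_pair_def
proof (intro ballI impI)
  fix r r' s s' assume coeffs: "r \<in> R" "r' \<in> R" "s \<in> R" "s' \<in> R"
    and eq: "r * b i + r' * b j = s * b i + s' * b j"
  define c where "c k = (if k = i then r else if k = j then r' else 0)" for k
  define d where "d k = (if k = i then s else if k = j then s' else 0)" for k
  have fin: "finite {i, j}" by simp
  have "c \<in> finite_coeffs R UNIV" "d \<in> finite_coeffs R UNIV"
    using coeffs \<open>0 \<in> R\<close> by (auto simp: finite_coeffs_def c_def d_def intro: finite_subset[OF _ fin])
  moreover have "{k. c k \<noteq> 0} \<subseteq> {i, j}" "{k. d k \<noteq> 0} \<subseteq> {i, j}"
    by (auto simp: c_def d_def)
  then have "lin_comb b c = lin_comb b d"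
    using \<open>i \<noteq> j\<close> eq by (simp add: lin_comb_eq_sum[OF fin] c_def d_def)
  ultimately have "c = d"
    using basis by (auto simp: left_free_basis_iff_bij_betw bij_betw_def dest: inj_onD)
  then show "r = s \<and> r' = s'"
    using \<open>i \<noteq> j\<close> by (metis c_def d_def)
qed

definition reindex_coeffs :: "('j \<Rightarrow> 'i) \<Rightarrow> 'j set \<Rightarrow> ('i \<Rightarrow> 'a::zero) \<Rightarrow> 'j \<Rightarrow> 'a" where
  "reindex_coeffs h J c j = (if j \<in> J then c (h j) else 0)"

lemma support_reindex_coeffs: "{j. reindex_coeffs h J c j \<noteq> 0} = h -` {i. c i \<noteq> 0} \<inter> J"
  by (auto simp: reindex_coeffs_def)

lemma image_support_reindex_coeffs:
  assumes "bij_betw h J UNIV"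
  shows "h ` {j. reindex_coeffs h J c j \<noteq> 0} = {i. c i \<noteq> 0}"
proof
  show "h ` {j. reindex_coeffs h J c j \<noteq> 0} \<subseteq> {i. c i \<noteq> 0}"
    by (auto simp: support_reindex_coeffs)
  show "{i. c i \<noteq> 0} \<subseteq> h ` {j. reindex_coeffs h J c j \<noteq> 0}"
  proof
    fix i assume "i \<in> {i. c i \<noteq> 0}"
    moreover have "inv_into J h i \<in> J" "h (inv_into J h i) = i"
      using assms by (auto simp: bij_betw_def inv_into_into f_inv_into_f)
    ultimately show "i \<in> h ` {j. reindex_coeffs h J c j \<noteq> 0}"
      by (intro rev_image_eqI[of "inv_into J h i"]) (auto simp: support_reindex_coeffs)
  qed
qed

lemma bij_betw_reindex_coeffs:
  fixes h :: "'j \<Rightarrow> 'i" and R :: "'a::ring_1 set"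
  assumes h: "bij_betw h J UNIV" and "0 \<in> R"
  shows "bij_betw (reindex_coeffs h J) (finite_coeffs R UNIV) (finite_coeffs R J)"
proof (rule bij_betw_byWitness[where f' = "\<lambda>e. e \<circ> inv_into J h"])
  have inj: "inj_on h J" and inv: "\<And>i. inv_into J h i \<in> J \<and> h (inv_into J h i) = i"
    using h by (auto simp: bij_betw_def inv_into_into f_inv_into_f)
  show "\<forall>c\<in>finite_coeffs R UNIV. reindex_coeffs h J c \<circ> inv_into J h = c"
    using inv by (simp add: reindex_coeffs_def fun_eq_iff)
  show "\<forall>e\<in>finite_coeffs R J. reindex_coeffs h J (e \<circ> inv_into J h) = e"
    using inj by (auto simp: reindex_coeffs_def finite_coeffs_def fun_eq_iff)
  show "reindex_coeffs h J ` finite_coeffs R UNIV \<subseteq> finite_coeffs R J"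
  proof (rule image_subsetI)
    fix c :: "'i \<Rightarrow> 'a" assume c: "c \<in> finite_coeffs R UNIV"
    then have "finite {j. reindex_coeffs h J c j \<noteq> 0}"
      unfolding support_reindex_coeffs finite_coeffs_def using finite_vimage_IntI[OF _ inj] by blast
    moreover have "\<forall>j. reindex_coeffs h J c j \<in> R" "\<forall>j. j \<notin> J \<longrightarrow> reindex_coeffs h J c j = 0"
      using c \<open>0 \<in> R\<close> by (auto simp: reindex_coeffs_def finite_coeffs_def)
    ultimately show "reindex_coeffs h J c \<in> finite_coeffs R J"
      by (simp add: finite_coeffs_def)
  qed
  have "{i. e (inv_into J h i) \<noteq> 0} \<subseteq> h ` {j. e j \<noteq> 0}" for e :: "'j \<Rightarrow> 'a"
  proof
    fix i assume "i \<in> {i. e (inv_into J h i) \<noteq> 0}"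
    then show "i \<in> h ` {j. e j \<noteq> 0}"
      using inv[of i] by (intro rev_image_eqI[of "inv_into J h i"]) auto
  qed
  then have "finite {i. e (inv_into J h i) \<noteq> 0}" if "finite {j. e j \<noteq> 0}" for e :: "'j \<Rightarrow> 'a"
    using finite_subset that by blast
  then show "(\<lambda>e. e \<circ> inv_into J h) ` finite_coeffs R J \<subseteq> finite_coeffs R UNIV"
    by (auto simp: finite_coeffs_def)
qed

lemma lin_comb_reindex_coeffs:
  assumes h: "bij_betw h J UNIV" and b': "\<forall>j\<in>J. b' j = b (h j)"
  shows "lin_comb b' (reindex_coeffs h J c) = lin_comb b c"
proof -
  let ?S = "{j. reindex_coeffs h J c j \<noteq> 0}"
  have "inj_on h ?S"
    using h by (auto simp: bij_betw_def support_reindex_coeffs intro: inj_on_subset)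
  then have "(\<Sum>i\<in>h ` ?S. c i * b i) = (\<Sum>j\<in>?S. c (h j) * b (h j))"
    by (simp add: sum.reindex)
  also have "\<dots> = (\<Sum>j\<in>?S. reindex_coeffs h J c j * b' j)"
    using b' by (intro sum.cong) (auto simp: reindex_coeffs_def)
  finally show ?thesis
    by (simp add: lin_comb_def image_support_reindex_coeffs[OF h])
qed

lemma left_free_basis_reindex:
  assumes basis: "left_free_basis R UNIV b" and h: "bij_betw h J UNIV"
    and b': "\<forall>j\<in>J. b' j = b (h j)" and "0 \<in> R"
  shows "left_free_basis R J b'"
proof -
  have "bij_betw (lin_comb b) (finite_coeffs R UNIV) UNIV"
    using basis by (simp add: left_free_basis_iff_bij_betw)
  then have "bij_betw (lin_comb b' \<circ> reindex_coeffs h J) (finite_coeffs R UNIV) UNIV"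
    by (simp add: comp_def lin_comb_reindex_coeffs[OF h b'])
  then show ?thesis
    unfolding left_free_basis_iff_bij_betw bij_betw_comp_iff[OF bij_betw_reindex_coeffs[OF h \<open>0 \<in> R\<close>]] .
qed

lemma left_free_basis_pbw_mono_pair:
  assumes "left_free_basis R UNIV (\<lambda>(a::nat, b::nat). x ^ a * y ^ b)" "0 \<in> R"
  shows "left_free_basis R {\<alpha>. length \<alpha> = length [x, y]} (pbw_mono [x, y])"
proof (rule left_free_basis_reindex[OF assms(1) _ _ assms(2)])
  have pairs: "{\<alpha>. length \<alpha> = length [x, y]} = {[a, b] | a b. True}"
    by (auto simp: length_Suc_conv)
  show "bij_betw (\<lambda>\<alpha>::nat list. (\<alpha> ! 0, \<alpha> ! 1)) {\<alpha>. length \<alpha> = length [x, y]} UNIV"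
    unfolding pairs by (rule bij_betw_byWitness[where f' = "\<lambda>(a, b). [a, b]"]) auto
  show "\<forall>\<alpha>\<in>{\<alpha>. length \<alpha> = length [x, y]}.
      pbw_mono [x, y] \<alpha> = (\<lambda>(a, b). x ^ a * y ^ b) (\<alpha> ! 0, \<alpha> ! 1)"
    unfolding pairs by (auto simp: pbw_mono_def)
qed

lemma ring_aut_on_if_skew_commuting:
  assumes R: "subring_set R" and bij: "bij_betw s R R"
    and comm: "\<And>r. r \<in> R \<Longrightarrow> x * r = s r * x"
    and cancel: "\<And>r r'. r \<in> R \<Longrightarrow> r' \<in> R \<Longrightarrow> r * x = r' * x \<Longrightarrow> r = r'"
  shows "ring_aut_on R s"
proof -
  have one: "1 \<in> R"
    using R by (simp add: subring_set_def)
  have add: "a + b \<in> R" and mult: "a * b \<in> R" if "a \<in> R" "b \<in> R" for a b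
    using R that by (auto simp: subring_set_def)
  have sR: "s r \<in> R" if "r \<in> R" for r
    using bij that by (auto simp: bij_betw_def)
  have "s 1 * x = 1 * x"
    using comm[OF one] by simp
  then have "s 1 = 1"
    by (rule cancel[rotated 2]) (simp_all add: sR one)
  moreover have "s (a + b) = s a + s b \<and> s (a * b) = s a * s b" if a: "a \<in> R" and b: "b \<in> R" for a b
  proof
    have "s (a + b) * x = x * a + x * b"
      using comm[OF add[OF a b]] by (simp add: distrib_left)
    also have "\<dots> = (s a + s b) * x"
      using comm[OF a] comm[OF b] by (simp add: distrib_right)
    finally show "s (a + b) = s a + s b"
      by (rule cancel[rotated 2]) (simp_all add: sR add a b)
    have "s (a * b) * x = (x * a) * b"
      using comm[OF mult[OF a b]] by (simp add: mult.assoc)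
    also have "\<dots> = s a * (s b * x)"
      using comm[OF a] comm[OF b] by (simp add: mult.assoc)
    also have "\<dots> = (s a * s b) * x"
      by (simp add: mult.assoc)
    finally show "s (a * b) = s a * s b"
      by (rule cancel[rotated 2]) (simp_all add: sR mult a b)
  qed
  ultimately show ?thesis
    using bij by (simp add: ring_aut_on_def)
qed

lemma ring_aut_on_if_skew_commuting_pair:
  assumes R: "subring_set R" and indep: "left_independent_pair R x y"
    and s: "\<And>r. r \<in> R \<Longrightarrow> s r \<in> R \<and> t r \<in> R \<and> x * r = s r * x + t r * y"
    and \<sigma>: "bij_betw \<sigma> R R" "\<And>r. r \<in> R \<Longrightarrow> \<sigma> r \<in> R \<and> x * r = \<sigma> r * x"
  shows "ring_aut_on R s \<and> (\<forall>r\<in>R. t r = 0)"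
proof -
  have "0 \<in> R" using R by (simp add: subring_set_def)
  have s_eq: "s r = \<sigma> r \<and> t r = 0" if "r \<in> R" for r
    using left_independent_pairD[OF indep, of "s r" "t r" "\<sigma> r" 0] s[OF that] \<sigma>(2)[OF that] \<open>0 \<in> R\<close>
    by simp
  have "bij_betw s R R \<longleftrightarrow> bij_betw \<sigma> R R"
    by (rule bij_betw_cong) (simp add: s_eq)
  moreover have "x * r = s r * x" if "r \<in> R" for r
    using \<sigma>(2)[OF that] s_eq[OF that] by simp
  moreover have "r = r'" if "r \<in> R" "r' \<in> R" "r * x = r' * x" for r r'
    using left_independent_pairD[OF indep, of r 0 r' 0] that \<open>0 \<in> R\<close> by simp
  ultimately have "ring_aut_on R s"
    using \<sigma>(1) by (intro ring_aut_on_if_skew_commuting[OF R]) auto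
  then show ?thesis
    using s_eq by simp
qed

lemma ring_aut_on_nonzero:
  assumes "ring_aut_on R s" "0 \<in> R" "r \<in> R" "r \<noteq> 0"
  shows "s r \<noteq> 0"
proof -
  have "s 0 = 0"
    using assms(1,2) unfolding ring_aut_on_def by (metis add_cancel_right_right)
  moreover have "inj_on s R"
    using assms(1) by (simp add: ring_aut_on_def bij_betw_def)
  ultimately show ?thesis
    using assms(2-4) by (metis inj_onD)
qed

lemma zero_in_lin_span_vars: "0 \<in> S0 \<Longrightarrow> 0 \<in> S1 \<Longrightarrow> 0 \<in> lin_span_vars S0 S1 xs"
  unfolding lin_span_vars_def by (intro CollectI exI[of _ 0] exI[of _ "\<lambda>_. 0"]) simp

lemma graded_qc_skew_PBW_intro:
  assumes graded: "graded_alg phi R Rg"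
    and basis: "left_free_basis R {\<alpha>. length \<alpha> = length xs} (pbw_mono xs)"
    and \<sigma>: "\<And>i. i < length xs \<Longrightarrow> ring_aut_on R (\<sigma> i) \<and> (\<forall>m. \<sigma> i ` Rg m \<subseteq> Rg m) \<and>
                (\<forall>r\<in>R. xs ! i * r = \<sigma> i r * xs ! i)"
    and c: "\<And>i j. i < length xs \<Longrightarrow> j < length xs \<Longrightarrow>
              c i j \<in> Rg 0 \<and> c i j \<noteq> 0 \<and> (\<exists>d\<in>R. c i j * d = 1 \<and> d * c i j = 1) \<and>
              xs ! j * xs ! i = c i j * xs ! i * xs ! j"
  shows "graded_qc_skew_PBW phi R Rg xs"
proof -
  have R: "subring_set R" and Rg: "\<And>m. Rg m \<subseteq> R \<and> 0 \<in> Rg m"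
    using graded unfolding graded_alg_def by blast+
  then have "0 \<in> R" by (simp add: subring_set_def)
  have \<sigma>R: "\<sigma> i r \<in> R" if "i < length xs" "r \<in> R" for i r
    using \<sigma>[OF that(1)] that(2) by (auto simp: ring_aut_on_def dest: bij_betwE)
  have cR: "c i j \<in> R" if "i < length xs" "j < length xs" for i j
    using c[OF that] Rg by blast
  have zero_graded: "(\<lambda>_. 0) ` Rg m \<subseteq> Rg (Suc m)" for m
    using Rg by auto
  have diff: "xs ! j * xs ! i - c i j * xs ! i * xs ! j = 0" if "i < length xs" "j < length xs" for i j
    using c[OF that] by simp
  have skew: "skew_PBW R xs"
    unfolding skew_PBW_def
  proof (intro conjI R basis allI impI ballI)
    fix i r assume i: "i < length xs" and r: "r \<in> R" "r \<noteq> 0"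
    then have "\<sigma> i r \<noteq> 0"
      using \<sigma>[OF i] ring_aut_on_nonzero \<open>0 \<in> R\<close> by blast
    then show "\<exists>c\<in>R. c \<noteq> 0 \<and> xs ! i * r - c * xs ! i \<in> R"
      using \<sigma>[OF i] \<sigma>R[OF i] r \<open>0 \<in> R\<close> by (intro bexI[of _ "\<sigma> i r"]) auto
  next
    fix i j assume "i < length xs" "j < length xs"
    then show "\<exists>c'\<in>R. c' \<noteq> 0 \<and> xs ! j * xs ! i - c' * xs ! i * xs ! j \<in> lin_span_vars R R xs"
      using c cR diff zero_in_lin_span_vars \<open>0 \<in> R\<close> by (intro bexI[of _ "c i j"]) simp_all
  qed
  show ?thesis
    unfolding graded_qc_skew_PBW_def
    by (rule conjI[OF skew conjI[OF graded]], rule exI[of _ \<sigma>], rule exI[of _ "\<lambda>_ _. 0"], rule exI[of _ c])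
      (use \<sigma> \<sigma>R c cR diff Rg zero_graded \<open>0 \<in> R\<close> in \<open>simp add: ring_aut_on_def zero_in_lin_span_vars\<close>)
qed

locale graded_trimmed_double_ore =
  fixes phi :: "'k::field \<Rightarrow> 'a::ring_1"
    and R :: "'a set" and Rg :: "nat \<Rightarrow> 'a set"
    and x1 x2 :: 'a and p12 p11 :: 'k
    and s11 s12 s21 s22 :: "'a \<Rightarrow> 'a"
  assumes central_alg_hom: "central_alg_hom phi"
    and connected_graded: "connected_graded phi R Rg"
    and double_ore: "graded_trimmed_right_double_ore phi R Rg x1 x2 p12 p11 s11 s12 s21 s22"
begin

lemma phi_add: "phi (k + l) = phi k + phi l"
  and phi_mult: "phi (k * l) = phi k * phi l"
  and phi_one: "phi 1 = 1"
  using central_alg_hom unfolding central_alg_hom_def by blast+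

lemma phi_zero: "phi 0 = 0"
  using phi_add[of 0 0] by simp

lemma graded: "graded_alg phi R Rg"
  and inj_phi: "inj phi"
  and Rg_zero: "Rg 0 = range phi"
  using connected_graded by (simp_all add: connected_graded_def)

lemma phi_eq_zero_iff: "phi k = 0 \<longleftrightarrow> k = 0"
proof
  assume "phi k = 0"
  then have "phi k = phi 0" by (simp add: phi_zero)
  then show "k = 0" by (rule injD[OF inj_phi])
qed (simp add: phi_zero)

lemma phi_inverse: "k \<noteq> 0 \<Longrightarrow> phi k * phi (inverse k) = 1 \<and> phi (inverse k) * phi k = 1"
  by (simp add: phi_mult[symmetric] phi_one)

lemma subring: "subring_set R"
  and range_phi: "range phi \<subseteq> R"
  and relation: "x2 * x1 = phi p12 * x1 * x2 + phi p11 * x1 ^ 2"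
  and basis: "left_free_basis R UNIV (\<lambda>(a::nat, b::nat). x1 ^ a * x2 ^ b)"
  and sigma: "r \<in> R \<Longrightarrow> s11 r \<in> R \<and> s12 r \<in> R \<and> s21 r \<in> R \<and> s22 r \<in> R \<and>
      x1 * r = s11 r * x1 + s12 r * x2 \<and> x2 * r = s21 r * x1 + s22 r * x2"
  and sigma_graded: "s11 ` Rg m \<subseteq> Rg m" "s22 ` Rg m \<subseteq> Rg m"
  using double_ore unfolding graded_trimmed_right_double_ore_def by simp_all

lemma phi_in_R: "phi k \<in> R"
  using range_phi by blast

lemma zero_in_R: "0 \<in> R"
  using subring by (simp add: subring_set_def)

lemma phi_unit:
  assumes "k \<noteq> 0"
  shows "phi k \<in> Rg 0 \<and> phi k \<noteq> 0 \<and> (\<exists>d\<in>R. phi k * d = 1 \<and> d * phi k = 1)"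
proof -
  have "\<exists>d\<in>R. phi k * d = 1 \<and> d * phi k = 1"
    using phi_inverse[OF assms] phi_in_R by blast
  then show ?thesis
    using assms by (simp add: phi_eq_zero_iff Rg_zero)
qed

lemma independent_x1_x2: "left_independent_pair R x1 x2"
  using left_free_basis_independent_pair[OF basis _ zero_in_R, of "(1, 0)" "(0, 1)"] by simp

lemma independent_x1x2_x1sq: "left_independent_pair R (x1 * x2) (x1 ^ 2)"
  using left_free_basis_independent_pair[OF basis _ zero_in_R, of "(1, 1)" "(2, 0)"] by simp

lemma x2_x1_commute: "p11 = 0 \<Longrightarrow> x2 * x1 = phi p12 * x1 * x2"
  using relation phi_zero by simp

lemma x1_x2_commute:
  assumes "p12 \<noteq> 0" "p11 = 0"
  shows "x1 * x2 = phi (inverse p12) * x2 * x1"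
proof -
  have "phi (inverse p12) * x2 * x1 = (phi (inverse p12) * phi p12) * (x1 * x2)"
    using x2_x1_commute[OF assms(2)] by (simp add: mult.assoc)
  then show ?thesis
    using phi_inverse[OF assms(1)] by simp
qed

lemma conditions_if_graded_qc_skew_PBW:
  assumes "graded_qc_skew_PBW phi R Rg [x1, x2]"
  shows "p12 \<noteq> 0 \<and> p11 = 0 \<and> ring_aut_on R s11 \<and> ring_aut_on R s22 \<and>
         (\<forall>r\<in>R. s12 r = 0) \<and> (\<forall>r\<in>R. s21 r = 0)"
proof -
  obtain \<sigma> \<delta> c where
      \<sigma>: "\<forall>i<length [x1, x2]. \<forall>r\<in>R. \<sigma> i r \<in> R \<and> \<delta> i r \<in> R \<and>
            [x1, x2] ! i * r = \<sigma> i r * [x1, x2] ! i + \<delta> i r"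
    and c: "\<forall>i<length [x1, x2]. \<forall>j<length [x1, x2]. c i j \<in> R \<and> c i j \<noteq> 0 \<and>
            [x1, x2] ! j * [x1, x2] ! i - c i j * [x1, x2] ! i * [x1, x2] ! j \<in> lin_span_vars R R [x1, x2]"
    and \<delta>: "\<forall>i<length [x1, x2]. \<forall>r\<in>R. \<delta> i r = 0"
    and comm: "\<forall>i<length [x1, x2]. \<forall>j<length [x1, x2]. [x1, x2] ! j * [x1, x2] ! i = c i j * [x1, x2] ! i * [x1, x2] ! j"
    and bij: "\<forall>i<length [x1, x2]. bij_betw (\<sigma> i) R R"
    using assms unfolding graded_qc_skew_PBW_def by (elim conjE exE) (rule that)
  have "ring_aut_on R s11 \<and> (\<forall>r\<in>R. s12 r = 0)"
  proof (rule ring_aut_on_if_skew_commuting_pair[OF subring independent_x1_x2 _ _, of _ _ "\<sigma> 0"])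
    show "bij_betw (\<sigma> 0) R R" using bij by simp
    show "\<sigma> 0 r \<in> R \<and> x1 * r = \<sigma> 0 r * x1" if "r \<in> R" for r
      using \<sigma>[rule_format, of 0 r] \<delta>[rule_format, of 0 r] that by simp
  qed (use sigma in blast)
  moreover have "ring_aut_on R s22 \<and> (\<forall>r\<in>R. s21 r = 0)"
  proof (rule ring_aut_on_if_skew_commuting_pair[OF subring left_independent_pair_swap[OF independent_x1_x2] _ _,
        of _ _ "\<sigma> 1"])
    show "bij_betw (\<sigma> 1) R R" using bij by simp
    show "\<sigma> 1 r \<in> R \<and> x2 * r = \<sigma> 1 r * x2" if "r \<in> R" for r
      using \<sigma>[rule_format, of 1 r] \<delta>[rule_format, of 1 r] that by simp
  qed (use sigma in \<open>simp add: add.commute\<close>)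
  moreover have "c 0 1 = phi p12 \<and> 0 = phi p11"
  proof -
    have "c 0 1 * (x1 * x2) + 0 * x1 ^ 2 = phi p12 * (x1 * x2) + phi p11 * x1 ^ 2"
      using comm[rule_format, of 0 1] relation by (simp add: mult.assoc)
    then show ?thesis
      using left_independent_pairD[OF independent_x1x2_x1sq, of "c 0 1" 0 "phi p12" "phi p11"]
        c[rule_format, of 0 1] zero_in_R phi_in_R by simp
  qed
  ultimately show ?thesis
    using c[rule_format, of 0 1] phi_zero phi_eq_zero_iff by auto
qed

lemma graded_qc_skew_PBW_if_conditions:
  assumes "p12 \<noteq> 0" "p11 = 0" "ring_aut_on R s11" "ring_aut_on R s22"
    and "\<forall>r\<in>R. s12 r = 0" "\<forall>r\<in>R. s21 r = 0"
  shows "graded_qc_skew_PBW phi R Rg [x1, x2]"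
proof (rule graded_qc_skew_PBW_intro[where \<sigma> = "\<lambda>i. if i = 0 then s11 else s22"
      and c = "\<lambda>i j. phi (if i = j then 1 else if i = 0 then p12 else inverse p12)"])
  show "graded_alg phi R Rg" by (rule graded)
  show "left_free_basis R {\<alpha>. length \<alpha> = length [x1, x2]} (pbw_mono [x1, x2])"
    by (rule left_free_basis_pbw_mono_pair[OF basis zero_in_R])
next
  fix i :: nat assume "i < length [x1, x2]"
  then consider "i = 0" | "i = 1" by fastforce
  then show "ring_aut_on R (if i = 0 then s11 else s22) \<and>
      (\<forall>m. (if i = 0 then s11 else s22) ` Rg m \<subseteq> Rg m) \<and>
      (\<forall>r\<in>R. [x1, x2] ! i * r = (if i = 0 then s11 else s22) r * [x1, x2] ! i)"
    by cases (use assms sigma sigma_graded in auto)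
next
  fix i j :: nat assume "i < length [x1, x2]" "j < length [x1, x2]"
  then have ij: "i \<in> {0, 1}" "j \<in> {0, 1}" by auto
  let ?k = "if i = j then 1 else if i = 0 then p12 else inverse p12"
  have "[x1, x2] ! j * [x1, x2] ! i = phi ?k * [x1, x2] ! i * [x1, x2] ! j"
    using ij x2_x1_commute[OF assms(2)] x1_x2_commute[OF assms(1,2)] by (auto simp: phi_one)
  moreover have "?k \<noteq> 0"
    using assms(1) by simp
  ultimately show "phi ?k \<in> Rg 0 \<and> phi ?k \<noteq> 0 \<and> (\<exists>d\<in>R. phi ?k * d = 1 \<and> d * phi ?k = 1) \<and>
      [x1, x2] ! j * [x1, x2] ! i = phi ?k * [x1, x2] ! i * [x1, x2] ! j"
    using phi_unit by blast
qed

end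

theorem theorem3p9:
  fixes phi :: "'k::field \<Rightarrow> 'a::ring_1"
    and R :: "'a set" and Rg :: "nat \<Rightarrow> 'a set"
    and x1 x2 :: 'a and p12 p11 :: 'k
    and s11 s12 s21 s22 :: "'a \<Rightarrow> 'a"
  assumes "central_alg_hom phi"
    and "connected_graded phi R Rg"
    and "graded_trimmed_right_double_ore phi R Rg x1 x2 p12 p11 s11 s12 s21 s22"
  shows "graded_qc_skew_PBW phi R Rg [x1, x2] \<longleftrightarrow>
           p12 \<noteq> 0 \<and> p11 = 0 \<and> ring_aut_on R s11 \<and> ring_aut_on R s22 \<and>
           (\<forall>r\<in>R. s12 r = 0) \<and> (\<forall>r\<in>R. s21 r = 0)"
proof -
  interpret graded_trimmed_double_ore phi R Rg x1 x2 p12 p11 s11 s12 s21 s22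
    using assms by unfold_locales
  show ?thesis
    using conditions_if_graded_qc_skew_PBW graded_qc_skew_PBW_if_conditions by blast
qed

end
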